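(* Let $q\geqslant 3$ be a prime power and $s\in\mathbb{Z}_{\geqslant 1}$. Then the non-fixed c-Wieferich primes in $\mathbb{F}_q[T]$ of degree $s$ are precisely the monic irreducible factors over $\mathbb{F}_q$ of the polynomials $R_{q,s,\alpha}=\prod_{i=1}^s(T^q-T-\alpha^{q^i})$ for $\alpha\in B_{q,s,0}$.
   Context: Carlitz module: for $N\in\mathbb{F}_q[T]$, $\rho_N(X)$ is the additive polynomial determined by requiring $N\mapsto\rho_N$ to be an $\mathbb{F}_q$-algebra homomorphism from $\mathbb{F}_q[T]$ to the ring of additive polynomials (multiplication = composition) with $\rho_T(X)=X^q+TX$. A monic irreducible $\mathcal{P}\in\mathbb{F}_q[T]$ is a c-Wieferich prime if $\rho_{\mathcal{P}-1}(1)\equiv0\pmod{\mathcal{P}^2}$ (known to be equivalent to $F_{\deg\mathcal{P}-1}\equiv0\pmod{\mathcal{P}}$), where $F_0=1$, $F_i=(-1)^i+(T^{q^i}-T)F_{i-1}$. A polynomial $f\in\mathbb{F}_q[T]$ is non-fixed if $f(T+a)=f(T)$ holds only for $a=0\in\mathbb{F}_q$. $B_{q,s,0}$ is the set of equivalence classes (under $\theta_1\sim\theta_2$ iff $\theta_1^{q^i}=\theta_2$ for some $i\geqslant0$) of elements $\alpha\in\mathbb{F}_{q^s}$ of degree $s$ over $\mathbb{F}_q$ with $\mathrm{Tr}_{\mathbb{F}_{q^s}/\mathbb{F}_q}(\alpha)=0$ and $F_{s-1}\equiv0\pmod{T^q-T-\alpha}$ in $\mathbb{F}_{q^s}[T]$.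 *)

theory Defs
  imports "HOL-Computational_Algebra.Polynomial_Factorial" "HOL-Library.Cardinality"
begin

fun Fseq :: "nat \<Rightarrow> nat \<Rightarrow> 'a::comm_ring_1 poly" where
  "Fseq q 0 = 1"
| "Fseq q (Suc i) = (-1) ^ Suc i + (monom 1 (q ^ Suc i) - monom 1 1) * Fseq q i"

definition carlitz_T :: "nat \<Rightarrow> 'a::comm_ring_1 poly \<Rightarrow> 'a poly" where
  "carlitz_T q a = a ^ q + monom 1 1 * a"

definition carlitz :: "nat \<Rightarrow> 'a::comm_ring_1 poly \<Rightarrow> 'a poly \<Rightarrow> 'a poly" where
  "carlitz q N a = (\<Sum>i\<le>degree N. smult (coeff N i) ((carlitz_T q ^^ i) a))"

definition c_wieferich :: "'k::{finite,field} poly \<Rightarrow> bool" where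
  "c_wieferich P \<longleftrightarrow> lead_coeff P = 1 \<and> irreducible P \<and>
     P ^ 2 dvd carlitz CARD('k) (P - 1) 1"

definition non_fixed :: "'a::comm_ring_1 poly \<Rightarrow> bool" where
  "non_fixed f \<longleftrightarrow> (\<forall>a. pcompose f [:a, 1:] = f \<longrightarrow> a = 0)"

definition is_field_hom :: "('k::field \<Rightarrow> 'L::field) \<Rightarrow> bool" where
  "is_field_hom \<phi> \<longleftrightarrow> \<phi> 1 = 1 \<and> (\<forall>x y. \<phi> (x + y) = \<phi> x + \<phi> y) \<and>
     (\<forall>x y. \<phi> (x * y) = \<phi> x * \<phi> y)"

definition alg_degree :: "('k::field \<Rightarrow> 'L::field) \<Rightarrow> 'L \<Rightarrow> nat" where
  "alg_degree \<phi> \<alpha> = (LEAST n. \<exists>p. p \<noteq> 0 \<and> degree p = n \<and> poly (map_poly \<phi> p) \<alpha> = 0)"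

definition trace_ext :: "nat \<Rightarrow> nat \<Rightarrow> 'L::comm_ring_1 \<Rightarrow> 'L" where
  "trace_ext q s \<alpha> = (\<Sum>i<s. \<alpha> ^ (q ^ i))"

definition frob_class :: "nat \<Rightarrow> 'L::comm_ring_1 \<Rightarrow> 'L set" where
  "frob_class q \<alpha> = {\<alpha> ^ (q ^ i) | i. True}"

definition B_set :: "('k::{finite,field} \<Rightarrow> 'L::{finite,field}) \<Rightarrow> nat \<Rightarrow> 'L set set" where
  "B_set \<phi> s = {frob_class CARD('k) \<alpha> | \<alpha>.
      alg_degree \<phi> \<alpha> = s \<and> trace_ext CARD('k) s \<alpha> = 0 \<and>
      (monom 1 CARD('k) - monom 1 1 - [:\<alpha>:]) dvd (Fseq CARD('k) (s - 1) :: 'L poly)}"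

definition R_poly :: "nat \<Rightarrow> nat \<Rightarrow> 'L::comm_ring_1 \<Rightarrow> 'L poly" where
  "R_poly q s \<alpha> = (\<Prod>i=1..s. monom 1 q - monom 1 1 - [:\<alpha> ^ (q ^ i):])"

end

(* Let P be monic irreducible of degree s over k = F_q, with a root \<theta> in L = F_(q^s), and put
   \<alpha> = \<theta>^q - \<theta>. Then Tr(\<alpha>) = 0, and by the additive Hilbert 90 every element of trace zero
   arises this way, so the roots of R_(q,s,\<alpha>) are the points \<theta>' + k with \<theta>'^q - \<theta>' a
   conjugate of \<alpha>; hence P divides some R_(q,s,\<alpha>) exactly when it has such a root.
   A translate P(X + a) equal to P permutes the conjugates \<theta>^(q^j), so P is non-fixed iff no
   \<theta>^(q^j) - \<theta> with 0 < j < s lies in k, i.e. iff the conjugates of \<alpha> are distinct, i.e. iff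
   \<alpha> has degree s.
   For the Wieferich condition specialise T to \<theta>: the additive polynomial \<rho>_P becomes X^(q^s),
   so P divides \<rho>_(P-1)(1), and the T-derivative of \<rho>_(P-1)(1) at \<theta> equals
   (-1)^(s-1) F_(s-1)(\<theta>). As P is separable, P^2 divides \<rho>_(P-1)(1) iff F_(s-1)(\<theta>) = 0; since
   F_(s-1) is invariant under translation by k, this says that X^q - X - \<alpha> divides F_(s-1). *)

theory Submission
  imports Defs "HOL-Library.FuncSet"
begin

section \<open>Field homomorphisms and polynomials\<close>

locale field_hom =
  fixes h :: "'a::field \<Rightarrow> 'b::field"
  assumes is_field_hom: "is_field_hom h"
begin

lemma hom_add [simp]: "h (x + y) = h x + h y"
  and hom_mult [simp]: "h (x * y) = h x * h y"
  and hom_one [simp]: "h 1 = 1"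
  using is_field_hom by (simp_all add: is_field_hom_def)

lemma hom_zero [simp]: "h 0 = 0"
  using hom_add[of 0 0] by (metis add_0 add_cancel_right_right)

lemma hom_uminus [simp]: "h (- x) = - h x"
  using hom_add[of x "- x"] by (simp add: eq_neg_iff_add_eq_0 add.commute)

lemma hom_diff [simp]: "h (x - y) = h x - h y"
  using hom_add[of x "- y"] by simp

text \<open>Not a simp rule: for the Frobenius \<open>h = (\<lambda>x. x ^ q)\<close> it rewrites \<open>(x ^ q) ^ q\<close> to itself.\<close>
lemma hom_power: "h (x ^ n) = h x ^ n"
  by (induction n) simp_all

lemma hom_of_nat [simp]: "h (of_nat n) = of_nat n"
  by (induction n) simp_all

lemma hom_sum [simp]: "h (sum f A) = (\<Sum>x\<in>A. h (f x))"
  by (induction A rule: infinite_finite_induct) simp_all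

lemma hom_eq_0_iff [simp]: "h x = 0 \<longleftrightarrow> x = 0"
proof
  assume "h x = 0"
  show "x = 0"
  proof (rule ccontr)
    assume "x \<noteq> 0"
    then have "h x * h (inverse x) = 1"
      by (simp flip: hom_mult)
    with \<open>h x = 0\<close> show False
      by simp
  qed
qed simp

lemma hom_inj: "inj h"
  by (rule injI) (metis hom_diff hom_eq_0_iff right_minus_eq)

lemma map_poly_add [simp]: "map_poly h (p + q) = map_poly h p + map_poly h q"
  and map_poly_uminus [simp]: "map_poly h (- p) = - map_poly h p"
  and map_poly_diff [simp]: "map_poly h (p - q) = map_poly h p - map_poly h q"
  and map_poly_const [simp]: "map_poly h [:c:] = [:h c:]"
  and map_poly_pCons [simp]: "map_poly h (pCons c p) = pCons (h c) (map_poly h p)"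
  and map_poly_smult [simp]: "map_poly h (smult c p) = smult (h c) (map_poly h p)"
  and map_poly_monom [simp]: "map_poly h (monom c n) = monom (h c) n"
  by (auto intro!: poly_eqI simp: coeff_map_poly coeff_pCons coeff_monom split: nat.split)

lemma map_poly_mult [simp]: "map_poly h (p * q) = map_poly h p * map_poly h q"
  by (induction p) (simp_all add: algebra_simps)

lemma map_poly_power [simp]: "map_poly h (p ^ n) = map_poly h p ^ n"
  by (induction n) simp_all

lemma map_poly_sum [simp]: "map_poly h (sum f A) = (\<Sum>x\<in>A. map_poly h (f x))"
  by (induction A rule: infinite_finite_induct) simp_all

lemma map_poly_prod [simp]: "map_poly h (prod f A) = (\<Prod>x\<in>A. map_poly h (f x))"
  by (induction A rule: infinite_finite_induct) simp_all

lemma poly_map_poly: "poly (map_poly h p) (h x) = h (poly p x)"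
  by (induction p) simp_all

lemma map_poly_pcompose: "map_poly h (pcompose p r) = pcompose (map_poly h p) (map_poly h r)"
  by (induction p) (simp_all add: pcompose_pCons)

lemma map_poly_pderiv: "map_poly h (pderiv p) = pderiv (map_poly h p)"
  by (rule poly_eqI) (simp add: coeff_map_poly coeff_pderiv)

lemma degree_map_poly [simp]: "degree (map_poly h p) = degree p"
  by (rule degree_map_poly) simp

lemma map_poly_eq_0_iff [simp]: "map_poly h p = 0 \<longleftrightarrow> p = 0"
  by (simp add: map_poly_eq_0_iff)

lemma map_poly_dvd_iff [simp]: "map_poly h p dvd map_poly h r \<longleftrightarrow> p dvd r"
proof
  assume dvd: "map_poly h p dvd map_poly h r"
  show "p dvd r"
  proof (cases "p = 0")
    case False
    have "map_poly h p dvd map_poly h (r mod p)"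
      using dvd div_mult_mod_eq[of r p] map_poly_add map_poly_mult
      by (metis dvd_add_right_iff dvd_triv_right)
    then have "r mod p = 0"
      using degree_mod_less[OF False, of r] False
      by (metis degree_map_poly dvd_imp_degree_le leD map_poly_eq_0_iff)
    then show ?thesis
      by (simp add: mod_eq_0_iff_dvd)
  qed (use dvd in simp)
qed (auto elim!: dvdE)

end

section \<open>Finite fields and the Frobenius map\<close>

text \<open>The library's \<open>finite_field_power_card_eq_same\<close> is stated for the sort \<open>finite_field\<close>,
  which does not apply to a type variable of sort \<open>{finite, field}\<close>.\<close>
lemma power_card_eq_self:
  fixes x :: "'a::{finite,field}"
  shows "x ^ CARD('a) = x"
proof (cases "x = 0")
  case False
  let ?U = "UNIV - {0} :: 'a set"
  have "bij_betw ((*) x) ?U ?U"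
    using False by (intro bij_betw_byWitness[where f' = "\<lambda>y. y / x"]) auto
  then have "(\<Prod>y\<in>?U. x * y) = \<Prod>?U"
    by (rule prod.reindex_bij_betw)
  then have "x ^ card ?U * \<Prod>?U = 1 * \<Prod>?U"
    by (simp add: prod.distrib)
  then have "x ^ card ?U = 1"
    by (simp only: mult_cancel_right) simp
  moreover have "CARD('a) = Suc (card ?U)"
    using card_Suc_Diff1[of "UNIV :: 'a set" 0] by simp
  ultimately show ?thesis
    by (metis power_Suc mult_1_right)
qed simp

lemma card_field_ge_2: "CARD('a::{finite,field}) \<ge> 2"
  using card_mono[of "UNIV :: 'a set" "{0, 1}"] by simp

text \<open>The polynomial \<open>(X + 1)^q - X^q - 1\<close> has degree below \<open>q\<close> but vanishes on all \<open>q\<close>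
  elements of the field.\<close>
lemma of_nat_card_choose_eq_0:
  assumes "0 < i" "i < CARD('a)"
  shows "of_nat (CARD('a) choose i) = (0::'a::{finite,field})"
proof -
  define n where "n = CARD('a)"
  define g :: "'a poly" where "g = [:1, 1:] ^ n - monom 1 n - 1"
  have n: "n \<ge> 2"
    unfolding n_def by (rule card_field_ge_2)
  have coeff_g: "coeff g j = (if j = 0 \<or> n \<le> j then 0 else of_nat (n choose j))" for j
  proof (cases "j \<le> n")
    case False
    then have "coeff ([:1, 1:] ^ n) j = (0::'a)"
      by (intro coeff_eq_0) (simp add: degree_power_eq)
    then show ?thesis
      using False by (simp add: g_def coeff_monom)
  qed (use n in \<open>auto simp: g_def coeff_linear_poly_power coeff_monom\<close>)
  have "g = 0"
  proof (rule ccontr)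
    assume "g \<noteq> 0"
    have "degree g < n"
      using n by (intro degree_lessI) (auto simp: coeff_g)
    moreover have "{x. poly g x = 0} = UNIV"
      by (auto simp: g_def poly_monom n_def power_card_eq_self)
    ultimately show False
      using card_poly_roots_bound[OF \<open>g \<noteq> 0\<close>] by (simp add: n_def)
  qed
  then show ?thesis
    using coeff_g[of i] assms by (simp add: n_def)
qed

lemma add_power_eq_if_choose_vanish:
  fixes x y :: "'a::comm_ring_1"
  assumes "\<And>i. 0 < i \<Longrightarrow> i < n \<Longrightarrow> of_nat (n choose i) = (0::'a)" "n > 0"
  shows "(x + y) ^ n = x ^ n + y ^ n"
proof -
  have "(x + y) ^ n = (\<Sum>k\<le>n. of_nat (n choose k) * x ^ k * y ^ (n - k))"
    by (rule binomial_ring)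
  also have "\<dots> = (\<Sum>k\<in>{0, n}. of_nat (n choose k) * x ^ k * y ^ (n - k))"
    by (intro sum.mono_neutral_right) (use assms in auto)
  finally show ?thesis
    using assms(2) by (simp add: add.commute)
qed

locale field_extension = phi: field_hom \<phi>
  for \<phi> :: "'k::{finite,field} \<Rightarrow> 'L::{finite,field}" +
  fixes q s :: nat
  assumes card_k: "CARD('k) = q"
    and card_L: "CARD('L) = q ^ s"
begin

declare phi.hom_power [simp]

lemma q_ge_2: "q \<ge> 2"
  using card_field_ge_2[where 'a = 'k] by (simp add: card_k)

lemma s_pos: "s > 0"
  using card_field_ge_2[where 'a = 'L] card_L by (cases s) auto

lemma power_q_k [simp]: "(c::'k) ^ q = c"
  using power_card_eq_self[of c] by (simp add: card_k)

lemma frob_add: "(x + y) ^ q = x ^ q + (y::'L) ^ q"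
proof (rule add_power_eq_if_choose_vanish)
  fix i assume "0 < i" "i < q"
  then show "of_nat (q choose i) = (0::'L)"
    using of_nat_card_choose_eq_0[where 'a = 'k] card_k phi.hom_of_nat[of "q choose i"] by simp
qed (use q_ge_2 in auto)

lemma frob_add_power: "(x + y) ^ q ^ n = x ^ q ^ n + (y::'L) ^ q ^ n"
  by (induction n arbitrary: x y) (simp_all add: power_mult frob_add)

lemma field_hom_frob: "field_hom (\<lambda>x::'L. x ^ q ^ n)"
  by unfold_locales (simp add: is_field_hom_def frob_add_power power_mult_distrib)

lemma frob_diff_power: "(x - y) ^ q ^ n = x ^ q ^ n - (y::'L) ^ q ^ n"
  and frob_sum_power: "(sum f A) ^ q ^ n = (\<Sum>a\<in>A. f a ^ q ^ n :: 'L)"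
  using field_hom.hom_diff[OF field_hom_frob] field_hom.hom_sum[OF field_hom_frob] by blast+

lemma frob_power_eq_iff [simp]: "x ^ q ^ n = y ^ q ^ n \<longleftrightarrow> x = (y::'L)"
  using field_hom.hom_inj[OF field_hom_frob] by (auto dest: injD)

lemma power_q_power_q: "((x::'L) ^ q ^ i) ^ q ^ j = x ^ q ^ (i + j)"
  by (simp add: power_add flip: power_mult)

lemma power_q_power_s [simp]: "(x::'L) ^ q ^ s = x"
  using power_card_eq_self[of x] card_L by simp

lemma phi_power_q_power [simp]: "\<phi> c ^ q ^ n = \<phi> c"
  by (induction n) (simp_all add: power_mult flip: phi.hom_power)

lemma range_phi_iff: "(x::'L) \<in> range \<phi> \<longleftrightarrow> x ^ q = x"
proof
  assume "x ^ q = x"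
  define g :: "'L poly" where "g = monom 1 q - monom 1 1"
  have "degree g = q"
    using q_ge_2 degree_add_eq_left[of "- monom 1 1" "monom (1::'L) q"]
    by (simp add: g_def degree_monom_eq)
  then have "g \<noteq> 0"
    using q_ge_2 by auto
  have "insert x (range \<phi>) \<subseteq> {y. poly g y = 0}"
    using \<open>x ^ q = x\<close> phi_power_q_power[of _ 1] by (auto simp: g_def poly_monom)
  then have "card (insert x (range \<phi>)) \<le> card {y. poly g y = 0}"
    by (intro card_mono poly_roots_finite \<open>g \<noteq> 0\<close>)
  also have "\<dots> \<le> q"
    using card_poly_roots_bound[OF \<open>g \<noteq> 0\<close>] \<open>degree g = q\<close> by simp
  finally have card_insert: "card (insert x (range \<phi>)) \<le> q" .
  show "x \<in> range \<phi>"
  proof (rule ccontr)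
    assume "x \<notin> range \<phi>"
    then have "card (insert x (range \<phi>)) = Suc q"
      using card_image[OF phi.hom_inj] card_k by simp
    with card_insert show False
      by simp
  qed
qed (use phi_power_q_power[of _ 1] in auto)

end

section \<open>Frobenius orbits and irreducible polynomials\<close>

lemma prod_lessThan_Suc_cyclic:
  fixes f :: "nat \<Rightarrow> 'a::comm_monoid_mult"
  assumes "f m = f 0"
  shows "(\<Prod>i<m. f (Suc i)) = (\<Prod>i<m. f i)"
proof (cases m)
  case (Suc n)
  then have "(\<Prod>i<m. f (Suc i)) = f 0 * (\<Prod>i<n. f (Suc i))"
    using assms by (simp add: mult.commute)
  also have "\<dots> = (\<Prod>i<m. f i)"
    using Suc by (simp only: prod.lessThan_Suc_shift)
  finally show ?thesis .
qed simp

lemma dvd_linear_times_imp_dvd: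
  fixes p :: "'a::field poly"
  assumes "p dvd [:- r, 1:] * Q" "poly p r \<noteq> 0"
  shows "p dvd Q"
proof -
  obtain k where k: "[:- r, 1:] * Q = p * k"
    using assms(1) by (rule dvdE)
  have "prime_elem [:- r, 1:]"
    by (rule prime_elem_linear_field_poly) simp
  moreover have "\<not> [:- r, 1:] dvd p"
    using assms(2) by (simp add: poly_eq_0_iff_dvd)
  moreover have "[:- r, 1:] dvd p * k"
    by (metis k dvd_triv_left)
  ultimately obtain k' where "k = [:- r, 1:] * k'"
    by (auto simp: prime_elem_dvd_mult_iff elim!: dvdE)
  with k have "[:- r, 1:] * Q = [:- r, 1:] * (p * k')"
    by (simp only: mult.left_commute)
  then show ?thesis
    by (metis mult_left_cancel pCons_eq_0_iff one_neq_zero dvd_triv_left)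
qed

lemma root_of_dvd_prod_linear:
  fixes p :: "'a::field poly"
  assumes "p dvd (\<Prod>i\<in>I. [:- r i, 1:])" "finite I" "degree p > 0"
  shows "\<exists>i\<in>I. poly p (r i) = 0"
  using assms(2,1)
proof (induction I rule: finite_induct)
  case empty
  then show ?case
    using assms(3) by (auto simp: is_unit_poly_iff)
next
  case (insert i I)
  then show ?case
    using dvd_linear_times_imp_dvd by auto
qed

lemma monic_dvd_imp_eq:
  fixes P Q :: "'a::field poly"
  assumes "P dvd Q" "lead_coeff P = 1" "lead_coeff Q = 1" "degree P = degree Q"
  shows "P = Q"
proof -
  obtain r where r: "Q = P * r"
    using assms(1) by (rule dvdE)
  have "P \<noteq> 0" "r \<noteq> 0"
    using assms(3) r by auto
  then have "degree r = 0"
    using r assms(4) by (simp add: degree_mult_eq)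
  moreover have "lead_coeff r = 1"
    using r assms(2,3) by (simp add: lead_coeff_mult)
  ultimately show ?thesis
    using r by (metis degree_0_id mult.right_neutral one_pCons)
qed

definition conjugates_poly :: "nat \<Rightarrow> 'a::comm_ring_1 \<Rightarrow> nat \<Rightarrow> 'a poly" where
  "conjugates_poly q \<theta> m = (\<Prod>i<m. [:- (\<theta> ^ q ^ i), 1:])"

lemma lead_coeff_conjugates_poly: "lead_coeff (conjugates_poly q (\<theta>::'a::field) m) = 1"
  by (simp only: conjugates_poly_def lead_coeff_prod) simp

lemma degree_conjugates_poly [simp]: "degree (conjugates_poly q (\<theta>::'a::field) m) = m"
  by (simp add: conjugates_poly_def degree_prod_eq_sum_degree)

lemma conjugates_poly_ne_0 [simp]: "conjugates_poly q (\<theta>::'a::field) m \<noteq> 0"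
  using lead_coeff_conjugates_poly[of q \<theta> m] by (metis leading_coeff_0_iff zero_neq_one)

lemma poly_conjugates_poly_eq_0_iff:
  "poly (conjugates_poly q \<theta> m) x = 0 \<longleftrightarrow> (\<exists>i<m. x = (\<theta>::'a::field) ^ q ^ i)"
  by (auto simp: conjugates_poly_def poly_prod prod_zero_iff)

context field_extension
begin

lemma frob_fixed_poly_in_range:
  assumes "map_poly (\<lambda>x::'L. x ^ q) p = p"
  shows "p \<in> range (map_poly \<phi>)"
proof -
  have "coeff p i \<in> range \<phi>" for i
    using arg_cong[OF assms, of "\<lambda>p. coeff p i"] q_ge_2 by (simp add: coeff_map_poly range_phi_iff)
  then have "map_poly \<phi> (map_poly (inv \<phi>) p) = p"
    by (intro poly_eqI) (simp add: coeff_map_poly f_inv_into_f inv_f_eq phi.hom_inj)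
  then show ?thesis
    by (metis rangeI)
qed

lemma conjugates_poly_in_range:
  assumes "\<theta> ^ q ^ m = (\<theta>::'L)"
  shows "conjugates_poly q \<theta> m \<in> range (map_poly \<phi>)"
proof (rule frob_fixed_poly_in_range)
  interpret frob: field_hom "\<lambda>x::'L. x ^ q"
    using field_hom_frob[of 1] by simp
  have "map_poly (\<lambda>x. x ^ q) (conjugates_poly q \<theta> m) = (\<Prod>i<m. [:- (\<theta> ^ q ^ Suc i), 1:])"
    by (simp add: conjugates_poly_def power_q_power_q[of _ _ 1, simplified])
  also have "\<dots> = conjugates_poly q \<theta> m"
    unfolding conjugates_poly_def using assms by (intro prod_lessThan_Suc_cyclic) simp
  finally show "map_poly (\<lambda>x. x ^ q) (conjugates_poly q \<theta> m) = conjugates_poly q \<theta> m" .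
qed

lemma root_frob_power:
  assumes "poly (map_poly \<phi> g) \<theta> = 0"
  shows "poly (map_poly \<phi> g) (\<theta> ^ q ^ n) = 0"
proof -
  interpret frob: field_hom "\<lambda>x::'L. x ^ q ^ n"
    by (rule field_hom_frob)
  have "map_poly (\<lambda>x. x ^ q ^ n) (map_poly \<phi> g) = map_poly \<phi> g"
    by (subst map_poly_map_poly) (auto simp: o_def)
  then show ?thesis
    using frob.poly_map_poly[of "map_poly \<phi> g" \<theta>] assms q_ge_2 by simp
qed

lemma irreducible_dvd_iff_root:
  assumes "irreducible P" "poly (map_poly \<phi> P) \<theta> = 0"
  shows "P dvd g \<longleftrightarrow> poly (map_poly \<phi> g) \<theta> = 0"
proof
  define root where "root p \<longleftrightarrow> p \<noteq> 0 \<and> poly (map_poly \<phi> p) \<theta> = 0" for p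
  have "root P"
    using assms by (auto simp: root_def)
  then obtain m where m: "root m" and m_least: "\<And>p. root p \<Longrightarrow> degree m \<le> degree p"
    using ex_has_least_nat[of root P degree] by blast
  have m_dvd: "m dvd p" if "poly (map_poly \<phi> p) \<theta> = 0" for p
  proof (rule ccontr)
    assume "\<not> m dvd p"
    then have "p mod m \<noteq> 0"
      by (simp add: mod_eq_0_iff_dvd)
    have "map_poly \<phi> p = map_poly \<phi> (p div m) * map_poly \<phi> m + map_poly \<phi> (p mod m)"
      by (metis div_mult_mod_eq phi.map_poly_add phi.map_poly_mult)
    then have "poly (map_poly \<phi> (p mod m)) \<theta> = 0"
      using that m by (simp add: root_def)
    with \<open>p mod m \<noteq> 0\<close> have "degree m \<le> degree (p mod m)"
      by (intro m_least) (simp add: root_def)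
    moreover have "degree (p mod m) < degree m"
      using degree_mod_less[of m p] m \<open>p mod m \<noteq> 0\<close> by (auto simp: root_def)
    ultimately show False
      by simp
  qed
  have "\<not> is_unit m"
    using m by (auto simp: root_def is_unit_poly_iff)
  then have "P dvd m"
    using assms(1) m_dvd[OF assms(2)] by (metis dvdE dvd_refl irreducibleD dvd_mult_unit_iff)
  moreover assume "poly (map_poly \<phi> g) \<theta> = 0"
  ultimately show "P dvd g"
    using m_dvd dvd_trans by blast
qed (use assms(2) in \<open>auto elim!: dvdE\<close>)

lemma inj_on_frob_powers:
  assumes "\<And>j. 0 < j \<Longrightarrow> j < m \<Longrightarrow> (\<theta>::'L) ^ q ^ j \<noteq> \<theta>"
  shows "inj_on (\<lambda>i. \<theta> ^ q ^ i) {..<m}"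
proof -
  have "\<theta> ^ q ^ i \<noteq> \<theta> ^ q ^ j" if "i < j" "j < m" for i j
  proof
    assume "\<theta> ^ q ^ i = \<theta> ^ q ^ j"
    also have "\<theta> ^ q ^ j = (\<theta> ^ q ^ (j - i)) ^ q ^ i"
      using that by (simp add: power_q_power_q)
    finally have "\<theta> ^ q ^ (j - i) = \<theta>"
      by (metis frob_power_eq_iff)
    moreover have "0 < j - i" "j - i < m"
      using that by auto
    ultimately show False
      using assms by blast
  qed
  then show ?thesis
    by (intro inj_onI) (metis lessThan_iff linorder_neqE_nat)
qed

lemma degree_ge_frob_orbit:
  assumes "\<And>j. 0 < j \<Longrightarrow> j < m \<Longrightarrow> (\<theta>::'L) ^ q ^ j \<noteq> \<theta>"
    and "p \<noteq> 0" "poly (map_poly \<phi> p) \<theta> = 0"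
  shows "m \<le> degree p"
proof -
  have "m = card ((\<lambda>i. \<theta> ^ q ^ i) ` {..<m})"
    using card_image[OF inj_on_frob_powers[OF assms(1)]] by simp
  also have "\<dots> \<le> card {x. poly (map_poly \<phi> p) x = 0}"
    using assms(2) by (intro card_mono poly_roots_finite) (auto intro: root_frob_power[OF assms(3)])
  also have "\<dots> \<le> degree p"
    using card_poly_roots_bound[of "map_poly \<phi> p"] assms(2) by simp
  finally show ?thesis .
qed

lemma exists_root_poly_of_frob_period:
  assumes "\<theta> ^ q ^ m = (\<theta>::'L)" "m > 0"
  shows "\<exists>p. p \<noteq> 0 \<and> degree p = m \<and> poly (map_poly \<phi> p) \<theta> = 0"
proof -
  obtain p where p: "map_poly \<phi> p = conjugates_poly q \<theta> m"
    using conjugates_poly_in_range[OF assms(1)] by (metis imageE)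
  have "p \<noteq> 0"
    using p by auto
  moreover have "degree p = m"
    by (metis p phi.degree_map_poly degree_conjugates_poly)
  moreover have "poly (map_poly \<phi> p) \<theta> = 0"
    using assms(2) by (auto simp: p poly_conjugates_poly_eq_0_iff intro!: exI[of _ 0])
  ultimately show ?thesis
    by blast
qed

lemma degree_le_frob_period:
  assumes "irreducible P" "poly (map_poly \<phi> P) \<theta> = 0" "\<theta> ^ q ^ m = \<theta>" "m > 0"
  shows "degree P \<le> m"
proof -
  obtain g where "g \<noteq> 0" "degree g = m" "poly (map_poly \<phi> g) \<theta> = 0"
    using exists_root_poly_of_frob_period[OF assms(3,4)] by blast
  then show ?thesis
    using irreducible_dvd_iff_root[OF assms(1,2)] dvd_imp_degree_le by metis
qed

lemma frob_power_ne_if_less_degree: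
  assumes "irreducible P" "poly (map_poly \<phi> P) \<theta> = 0" "0 < j" "j < degree P"
  shows "\<theta> ^ q ^ j \<noteq> \<theta>"
  using degree_le_frob_period[OF assms(1,2)] assms(3,4) by fastforce

lemma degree_irreducible_eq_frob_period:
  assumes "irreducible P" "poly (map_poly \<phi> P) \<theta> = 0" "\<theta> ^ q ^ m = \<theta>" "m > 0"
    and "\<And>j. 0 < j \<Longrightarrow> j < m \<Longrightarrow> \<theta> ^ q ^ j \<noteq> \<theta>"
  shows "degree P = m"
  using degree_le_frob_period[OF assms(1-4)] degree_ge_frob_orbit[OF assms(5) _ assms(2)] assms(1)
  by fastforce

lemma map_poly_irreducible_eq_conjugates_poly:
  assumes "irreducible P" "lead_coeff P = 1" "poly (map_poly \<phi> P) \<theta> = 0"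
  shows "map_poly \<phi> P = conjugates_poly q \<theta> (degree P)"
proof -
  define A where "A = (\<lambda>i. \<theta> ^ q ^ i) ` {..<degree P}"
  have "card A = degree P"
    unfolding A_def using inj_on_frob_powers frob_power_ne_if_less_degree[OF assms(1,3)] card_image
    by (metis card_lessThan)
  moreover have "poly (map_poly \<phi> P) z = poly (conjugates_poly q \<theta> (degree P)) z" if "z \<in> A" for z
    using that root_frob_power[OF assms(3)] by (auto simp: A_def poly_conjugates_poly_eq_0_iff)
  ultimately show ?thesis
    using assms(2) lead_coeff_conjugates_poly[of q \<theta> "degree P"]
    by (intro poly_eqI_degree_lead_coeff[of _ "degree P" _ A]) (simp_all add: coeff_map_poly)
qed

lemma alg_degree_eq_iff:
  assumes "\<alpha> ^ q ^ m = (\<alpha>::'L)" "m > 0"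
  shows "alg_degree \<phi> \<alpha> = m \<longleftrightarrow> (\<forall>j. 0 < j \<and> j < m \<longrightarrow> \<alpha> ^ q ^ j \<noteq> \<alpha>)"
proof -
  have le: "alg_degree \<phi> \<alpha> \<le> n" if "\<alpha> ^ q ^ n = \<alpha>" "n > 0" for n
    unfolding alg_degree_def by (rule Least_le) (rule exists_root_poly_of_frob_period[OF that])
  show ?thesis
  proof
    assume "alg_degree \<phi> \<alpha> = m"
    then show "\<forall>j. 0 < j \<and> j < m \<longrightarrow> \<alpha> ^ q ^ j \<noteq> \<alpha>"
      using le by fastforce
  next
    assume "\<forall>j. 0 < j \<and> j < m \<longrightarrow> \<alpha> ^ q ^ j \<noteq> \<alpha>"
    then show "alg_degree \<phi> \<alpha> = m"
      unfolding alg_degree_def using exists_root_poly_of_frob_period[OF assms] degree_ge_frob_orbit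
      by (intro Least_equality) blast+
  qed
qed

end

section \<open>Roots in \<open>L\<close> and the additive Hilbert 90\<close>

lemma card_degree_less:
  assumes "n > 0"
  shows "card {p :: 'a::{finite,comm_ring_1} poly. degree p < n} = CARD('a) ^ n"
proof -
  define to_poly :: "(nat \<Rightarrow> 'a) \<Rightarrow> 'a poly" where "to_poly f = (\<Sum>i<n. monom (f i) i)" for f
  let ?F = "PiE {..<n} (\<lambda>_. UNIV :: 'a set)"
  have coeff_to_poly: "coeff (to_poly f) i = (if i < n then f i else 0)" for f i
    unfolding to_poly_def coeff_sum coeff_monom by (simp add: sum.delta)
  have inj: "inj_on to_poly ?F"
  proof (intro inj_onI ext)
    fix f g i assume "f \<in> ?F" "g \<in> ?F" "to_poly f = to_poly g"
    then have "coeff (to_poly f) i = coeff (to_poly g) i"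
      by simp
    then show "f i = g i"
      using PiE_arb[OF \<open>f \<in> ?F\<close>, of i] PiE_arb[OF \<open>g \<in> ?F\<close>, of i]
      by (cases "i < n") (simp_all add: coeff_to_poly)
  qed
  have image: "to_poly ` ?F = {p. degree p < n}"
  proof (intro equalityI subsetI)
    fix p :: "'a poly" assume "p \<in> {p. degree p < n}"
    then have "p = to_poly (restrict (coeff p) {..<n})"
      by (auto intro!: poly_eqI simp: coeff_to_poly coeff_eq_0)
    moreover have "restrict (coeff p) {..<n} \<in> ?F"
      by simp
    ultimately show "p \<in> to_poly ` ?F"
      by (rule image_eqI)
  next
    fix p assume "p \<in> to_poly ` ?F"
    then obtain f where "p = to_poly f"
      by blast
    then show "p \<in> {p. degree p < n}"
      using assms by (auto intro!: degree_lessI simp: coeff_to_poly)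
  qed
  have "card {p :: 'a poly. degree p < n} = card ?F"
    using card_image[OF inj] by (simp only: image)
  also have "\<dots> = (\<Prod>i<n. CARD('a))"
    by (rule card_PiE) simp
  finally show ?thesis
    by simp
qed

lemma prime_elem_not_dvd_prod:
  assumes "prime_elem p" "finite A" "\<And>x. x \<in> A \<Longrightarrow> \<not> p dvd f x"
  shows "\<not> p dvd prod f A"
  using assms(2,3)
proof (induction A rule: finite_induct)
  case empty
  then show ?case
    using assms(1) by (simp add: prime_elem_def)
next
  case (insert x A)
  then show ?case
    using assms(1) by (simp add: prime_elem_dvd_mult_iff)
qed

text \<open>Fermat's little theorem in the field \<open>'a[X]/(P)\<close>, proved by letting multiplication by a
  nonzero residue permute the nonzero residues.\<close>
lemma irreducible_dvd_power_card_residues: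
  fixes P v :: "'a::{finite,field} poly"
  defines "R \<equiv> {w. degree w < degree P} - {0}"
  assumes "irreducible P" "v \<in> R"
  shows "P dvd v ^ card R - 1"
proof -
  have "P \<noteq> 0" "prime_elem P"
    using assms by (auto intro: field_poly_irreducible_imp_prime)
  have "degree P > 0"
    using assms by (auto simp: is_unit_iff_degree irreducible_def)
  then have "finite R"
    using card_degree_less[of "degree P", where 'a = 'a] card_gt_0_iff by (force simp: R_def)
  have not_dvd: "\<not> P dvd w" if "w \<in> R" for w
    using that \<open>P \<noteq> 0\<close> dvd_imp_degree_le[of P w] by (force simp: R_def)
  let ?mult = "\<lambda>w. v * w mod P"
  have "?mult w \<in> R" if "w \<in> R" for w
    using not_dvd[OF \<open>v \<in> R\<close>] not_dvd[OF that] \<open>prime_elem P\<close> degree_mod_less'[OF \<open>P \<noteq> 0\<close>, of "v * w"]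
    by (auto simp: R_def prime_elem_dvd_mult_iff mod_eq_0_iff_dvd)
  moreover have "inj_on ?mult R"
  proof (rule inj_onI)
    fix w w' assume "w \<in> R" "w' \<in> R" "?mult w = ?mult w'"
    then have "P dvd v * (w - w')"
      by (simp add: mod_eq_dvd_iff right_diff_distrib)
    then have "P dvd w - w'"
      using not_dvd[OF \<open>v \<in> R\<close>] \<open>prime_elem P\<close> by (simp add: prime_elem_dvd_mult_iff)
    moreover have "degree (w - w') < degree P"
      using \<open>w \<in> R\<close> \<open>w' \<in> R\<close> by (auto simp: R_def intro: degree_diff_less)
    ultimately show "w = w'"
      using \<open>P \<noteq> 0\<close> dvd_imp_degree_le[of P "w - w'"] by force
  qed
  ultimately have "?mult ` R = R"
    using \<open>finite R\<close> by (intro endo_inj_surj) auto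
  then have "prod id R = prod ?mult R"
    using prod.reindex[OF \<open>inj_on ?mult R\<close>, of id] by simp
  then have "prod id R mod P = (v ^ card R * prod id R) mod P"
    using mod_prod_eq[of "\<lambda>w. v * w" P R] by (simp add: prod.distrib)
  then have "P dvd prod id R - v ^ card R * prod id R"
    by (simp add: mod_eq_dvd_iff)
  then have "P dvd (v ^ card R - 1) * prod id R"
    by (simp add: left_diff_distrib dvd_diff_commute)
  moreover have "\<not> P dvd prod id R"
    using \<open>prime_elem P\<close> \<open>finite R\<close> not_dvd by (intro prime_elem_not_dvd_prod) auto
  ultimately show ?thesis
    using \<open>prime_elem P\<close> by (simp add: prime_elem_dvd_mult_iff)
qed

lemma irreducible_dvd_power_card_diff:
  fixes P u :: "'a::{finite,field} poly"
  assumes "irreducible P"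
  shows "P dvd u ^ CARD('a) ^ degree P - u"
proof -
  define R where "R = {w :: 'a poly. degree w < degree P} - {0}"
  have "P \<noteq> 0" "degree P > 0"
    using assms by (auto simp: is_unit_iff_degree irreducible_def)
  then have "Suc (card R) = CARD('a) ^ degree P"
    using card_degree_less[of "degree P", where 'a = 'a] card_gt_0_iff
    by (force simp: R_def card_Diff_singleton)
  then have power_card: "w ^ CARD('a) ^ degree P - w = w * (w ^ card R - 1)" for w :: "'a poly"
    by (simp add: right_diff_distrib flip: power_Suc)
  show ?thesis
  proof (cases "P dvd u")
    case False
    then have "u mod P \<in> R"
      using degree_mod_less'[OF \<open>P \<noteq> 0\<close>] by (auto simp: R_def mod_eq_0_iff_dvd)
    then have "P dvd (u mod P) ^ CARD('a) ^ degree P - u mod P"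
      unfolding power_card using irreducible_dvd_power_card_residues[OF assms] R_def by simp
    then show ?thesis
      by (simp add: mod_eq_dvd_iff [symmetric] mod_diff_eq [symmetric] power_mod)
  qed (simp add: power_card)
qed

lemma irreducible_dvd_X_power_card_diff:
  fixes P :: "'a::{finite,field} poly"
  assumes "irreducible P"
  shows "P dvd monom 1 (CARD('a) ^ degree P) - monom 1 1"
  using irreducible_dvd_power_card_diff[OF assms, of "monom 1 1"] by (simp add: monom_power)

context field_extension
begin

lemma map_poly_X_power_diff_eq_prod:
  "map_poly \<phi> (monom 1 (q ^ s) - monom 1 1) = (\<Prod>x\<in>UNIV. [:- x, 1::'L:])"
proof -
  have "q ^ s > 1"
    using q_ge_2 s_pos by (intro one_less_power) auto
  then have deg: "degree (monom 1 (q ^ s) - monom (1::'L) 1) = q ^ s"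
    using degree_add_eq_left[of "- monom (1::'L) 1" "monom 1 (q ^ s)"] by (simp add: degree_monom_eq)
  have "lead_coeff (\<Prod>x\<in>UNIV. [:- x, 1::'L:]) = 1"
    by (simp only: lead_coeff_prod) simp
  moreover have deg_prod: "degree (\<Prod>x\<in>UNIV. [:- x, 1::'L:]) = q ^ s"
    by (simp add: degree_prod_eq_sum_degree card_L)
  ultimately have "coeff (\<Prod>x\<in>UNIV. [:- x, 1::'L:]) (q ^ s) = 1"
    by simp
  with deg deg_prod \<open>q ^ s > 1\<close> show ?thesis
    by (intro poly_eqI_degree_lead_coeff[of _ "q ^ s" _ UNIV])
      (simp_all add: card_L poly_monom poly_prod coeff_map_poly)
qed

lemma exists_root_irreducible:
  assumes "irreducible P" "degree P = s"
  shows "\<exists>\<theta>. poly (map_poly \<phi> P) \<theta> = 0"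
proof -
  have "P dvd monom 1 (q ^ s) - monom 1 1"
    using irreducible_dvd_X_power_card_diff[OF assms(1)] assms(2) card_k by simp
  then have "map_poly \<phi> P dvd (\<Prod>x\<in>UNIV. [:- x, 1::'L:])"
    by (simp only: phi.map_poly_dvd_iff flip: map_poly_X_power_diff_eq_prod)
  from root_of_dvd_prod_linear[OF this] show ?thesis
    using assms s_pos by auto
qed

lemma trace_ext_frob_diff: "trace_ext q s (\<theta> ^ q - \<theta>) = (0::'L)"
proof -
  have "trace_ext q s (\<theta> ^ q - \<theta>) = (\<Sum>i<s. \<theta> ^ q ^ Suc i - \<theta> ^ q ^ i)"
    unfolding trace_ext_def using power_q_power_q[of \<theta> 1] by (simp add: frob_diff_power)
  also have "\<dots> = \<theta> ^ q ^ s - \<theta> ^ q ^ 0"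
    by (rule sum_lessThan_telescope)
  finally show ?thesis
    by simp
qed

lemma frob_diff_eq_iff: "y ^ q - y = x ^ q - x \<longleftrightarrow> y - x \<in> range \<phi>" for x y :: 'L
proof -
  have frob_diff: "(y - x) ^ q = y ^ q - x ^ q"
    using frob_diff_power[of y x 1] by simp
  show ?thesis
    unfolding range_phi_iff frob_diff by (auto simp: algebra_simps)
qed

lemma card_range_frob_diff: "card (range (\<lambda>x::'L. x ^ q - x)) = q ^ (s - 1)"
proof -
  define \<psi> where "\<psi> x = x ^ q - x" for x :: 'L
  have fibre: "\<psi> -` {\<psi> x} = (\<lambda>a. x + \<phi> a) ` UNIV" for x
    using frob_diff_eq_iff[of _ x] by (auto simp: \<psi>_def image_iff) (metis add.commute diff_add_cancel)
  have "card (UNIV :: 'L set) = (\<Sum>y\<in>range \<psi>. card (\<psi> -` {y}))"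
    by (subst card_UN_disjoint[symmetric]) (auto intro!: arg_cong[of _ _ card])
  also have "\<dots> = card (range \<psi>) * q"
  proof -
    have "card (\<psi> -` {y}) = q" if "y \<in> range \<psi>" for y
      using that phi.hom_inj card_k by (auto simp: fibre card_image inj_on_def)
    then show ?thesis
      by simp
  qed
  finally show ?thesis
    using card_L s_pos q_ge_2 by (cases s) (simp_all add: \<psi>_def mult.commute)
qed

text \<open>Additive Hilbert 90: the image of \<open>x \<mapsto> x^q - x\<close> has \<open>q^(s-1)\<close> elements, all of them roots
  of the trace polynomial, which has degree \<open>q^(s-1)\<close>.\<close>
lemma range_frob_diff: "range (\<lambda>x::'L. x ^ q - x) = {\<beta>. trace_ext q s \<beta> = 0}"
proof -
  define T :: "'L poly" where "T = (\<Sum>i<s. monom 1 (q ^ i))"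
  have "coeff T (q ^ (s - 1)) = (\<Sum>i<s. if i = s - 1 then 1 else 0)"
    using q_ge_2 by (simp add: T_def coeff_sum)
  then have "T \<noteq> 0"
    using s_pos by auto
  have "degree T \<le> q ^ (s - 1)"
    unfolding T_def using q_ge_2 by (intro degree_sum_le) (auto simp: degree_monom_eq)
  have poly_T: "poly T \<beta> = trace_ext q s \<beta>" for \<beta>
    by (simp add: T_def trace_ext_def poly_sum poly_monom)
  have "range (\<lambda>x::'L. x ^ q - x) \<subseteq> {\<beta>. poly T \<beta> = 0}"
    by (auto simp: poly_T trace_ext_frob_diff)
  moreover have "card {\<beta>. poly T \<beta> = 0} \<le> card (range (\<lambda>x::'L. x ^ q - x))"
    using card_poly_roots_bound[OF \<open>T \<noteq> 0\<close>] \<open>degree T \<le> q ^ (s - 1)\<close> card_range_frob_diff by simp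
  ultimately have "range (\<lambda>x::'L. x ^ q - x) = {\<beta>. poly T \<beta> = 0}"
    using poly_roots_finite[OF \<open>T \<noteq> 0\<close>] by (intro card_seteq) auto
  then show ?thesis
    by (simp add: poly_T)
qed

end

section \<open>The Carlitz module specialised at a point\<close>

text \<open>With \<open>T\<close> specialised to \<open>t\<close>, a sequence \<open>u\<close> stands for the additive polynomial
  \<open>\<Sum>k. u k X^(q^k)\<close>; \<open>comp_T\<close> and \<open>T_comp\<close> compose it with \<open>\<rho>\<^sub>T = X^q + t X\<close> on the right
  and on the left. Thus \<open>carlitz_coeff q t i\<close> and \<open>carlitz_poly_coeff q t g\<close> are the coefficient
  sequences of \<open>\<rho>\<^bsub>T^i\<^esub>\<close> and \<open>\<rho>\<^sub>g\<close>, \<open>carlitz_at_1 q t i\<close> is \<open>\<rho>\<^bsub>T^i\<^esub>(1)\<close>, and \<open>lin_ext A\<close>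
  extends \<open>T^i \<mapsto> A i\<close> linearly to polynomials.\<close>
definition comp_T :: "nat \<Rightarrow> 'a::comm_ring_1 \<Rightarrow> (nat \<Rightarrow> 'a) \<Rightarrow> nat \<Rightarrow> 'a" where
  "comp_T q t u k = (if k = 0 then 0 else u (k - 1)) + u k * t ^ q ^ k"

definition T_comp :: "nat \<Rightarrow> 'a::comm_ring_1 \<Rightarrow> (nat \<Rightarrow> 'a) \<Rightarrow> nat \<Rightarrow> 'a" where
  "T_comp q t u k = (if k = 0 then 0 else u (k - 1) ^ q) + t * u k"

fun carlitz_coeff :: "nat \<Rightarrow> 'a::comm_ring_1 \<Rightarrow> nat \<Rightarrow> nat \<Rightarrow> 'a" where
  "carlitz_coeff q t 0 = (\<lambda>k. if k = 0 then 1 else 0)"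
| "carlitz_coeff q t (Suc i) = comp_T q t (carlitz_coeff q t i)"

definition carlitz_at_1 :: "nat \<Rightarrow> 'a::comm_ring_1 \<Rightarrow> nat \<Rightarrow> 'a" where
  "carlitz_at_1 q t i = (\<Sum>k\<le>i. carlitz_coeff q t i k)"

text \<open>The derivative in \<open>T\<close> of \<open>\<rho>\<^bsub>T^i\<^esub>(1)\<close> at \<open>t\<close>, the \<open>q\<close>-th power contributing nothing.\<close>
fun carlitz_at_1_deriv :: "nat \<Rightarrow> 'a::comm_ring_1 \<Rightarrow> nat \<Rightarrow> 'a" where
  "carlitz_at_1_deriv q t 0 = 0"
| "carlitz_at_1_deriv q t (Suc i) = carlitz_at_1 q t i + t * carlitz_at_1_deriv q t i"

definition lin_ext :: "(nat \<Rightarrow> 'a::comm_ring_1) \<Rightarrow> 'a poly \<Rightarrow> 'a" where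
  "lin_ext A g = (\<Sum>i\<le>degree g. coeff g i * A i)"

definition carlitz_poly_coeff :: "nat \<Rightarrow> 'a::comm_ring_1 \<Rightarrow> 'a poly \<Rightarrow> nat \<Rightarrow> 'a" where
  "carlitz_poly_coeff q t g k = lin_ext (\<lambda>i. carlitz_coeff q t i k) g"

lemma carlitz_coeff_0_right: "carlitz_coeff q t i 0 = t ^ i"
  by (induction i) (simp_all add: comp_T_def)

lemma carlitz_coeff_eq_0: "i < k \<Longrightarrow> carlitz_coeff q t i k = 0"
  by (induction i arbitrary: k) (simp_all add: comp_T_def)

lemma carlitz_coeff_diag: "carlitz_coeff q t i i = 1"
  by (induction i) (simp_all add: comp_T_def carlitz_coeff_eq_0)

lemma lin_ext_eq_sum:
  assumes "degree g \<le> n"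
  shows "lin_ext A g = (\<Sum>i\<le>n. coeff g i * A i)"
  unfolding lin_ext_def using assms by (intro sum.mono_neutral_left) (auto simp: coeff_eq_0)

lemma lin_ext_add: "lin_ext A (g + h) = lin_ext A g + lin_ext A h"
proof -
  define n where "n = max (degree g) (degree h)"
  have "degree (g + h) \<le> n"
    unfolding n_def by (rule degree_add_le_max)
  then show ?thesis
    using lin_ext_eq_sum[of g n A] lin_ext_eq_sum[of h n A] lin_ext_eq_sum[of "g + h" n A]
    by (simp add: n_def sum.distrib algebra_simps)
qed

lemma lin_ext_smult: "lin_ext A (smult c g) = c * lin_ext A g"
  using lin_ext_eq_sum[of "smult c g" "degree g" A] degree_smult_le[of c g]
  by (simp add: lin_ext_def sum_distrib_left mult.assoc)

lemma lin_ext_diff: "lin_ext A (g - h) = lin_ext A g - lin_ext A h"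
  using lin_ext_add[of A g "- h"] lin_ext_smult[of A "- 1" h] by simp

lemma lin_ext_one [simp]: "lin_ext A 1 = A 0"
  by (simp add: lin_ext_def)

lemma lin_ext_pCons_0: "lin_ext A (pCons 0 g) = lin_ext (\<lambda>i. A (Suc i)) g"
proof -
  have "lin_ext A (pCons 0 g) = (\<Sum>i\<le>Suc (degree g). coeff (pCons 0 g) i * A i)"
    by (rule lin_ext_eq_sum) (simp add: degree_pCons_le)
  also have "\<dots> = lin_ext (\<lambda>i. A (Suc i)) g"
    by (subst sum.atMost_Suc_shift) (simp add: lin_ext_def)
  finally show ?thesis .
qed

lemma lin_ext_fun_add: "lin_ext (\<lambda>i. A i + B i) g = lin_ext A g + lin_ext B g"
  and lin_ext_fun_mult_left: "lin_ext (\<lambda>i. a * A i) g = a * lin_ext A g"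
  and lin_ext_fun_mult_right: "lin_ext (\<lambda>i. A i * a) g = lin_ext A g * a"
  by (simp_all add: lin_ext_def sum.distrib sum_distrib_left sum_distrib_right algebra_simps)

lemma carlitz_poly_coeff_add: "carlitz_poly_coeff q t (g + h) k = carlitz_poly_coeff q t g k + carlitz_poly_coeff q t h k"
  and carlitz_poly_coeff_smult: "carlitz_poly_coeff q t (smult c g) k = c * carlitz_poly_coeff q t g k"
  by (simp_all add: carlitz_poly_coeff_def lin_ext_add lin_ext_smult)

lemma carlitz_poly_coeff_pCons_0:
  "carlitz_poly_coeff q t (pCons 0 g) = comp_T q t (carlitz_poly_coeff q t g)"
proof
  fix k
  show "carlitz_poly_coeff q t (pCons 0 g) k = comp_T q t (carlitz_poly_coeff q t g) k"
    by (cases k) (simp_all add: carlitz_poly_coeff_def lin_ext_pCons_0 comp_T_def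
        lin_ext_fun_add lin_ext_fun_mult_right)
qed

lemma carlitz_poly_coeff_eq_0: "degree g < k \<Longrightarrow> carlitz_poly_coeff q t g k = 0"
  by (simp add: carlitz_poly_coeff_def lin_ext_def carlitz_coeff_eq_0)

lemma carlitz_poly_coeff_degree: "carlitz_poly_coeff q t g (degree g) = lead_coeff g"
proof -
  have "carlitz_poly_coeff q t g (degree g) = (\<Sum>i\<le>degree g. if i = degree g then lead_coeff g else 0)"
    unfolding carlitz_poly_coeff_def lin_ext_def
    by (intro sum.cong refl) (auto simp: carlitz_coeff_diag carlitz_coeff_eq_0)
  then show ?thesis
    by simp
qed

lemma carlitz_poly_coeff_0: "carlitz_poly_coeff q t g 0 = poly g t"
  by (simp add: carlitz_poly_coeff_def lin_ext_def carlitz_coeff_0_right poly_altdef)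

lemma lin_ext_carlitz_at_1:
  "lin_ext (carlitz_at_1 q t) g = (\<Sum>k\<le>degree g. carlitz_poly_coeff q t g k)"
proof -
  have "carlitz_at_1 q t i = (\<Sum>k\<le>degree g. carlitz_coeff q t i k)" if "i \<le> degree g" for i
    unfolding carlitz_at_1_def using that by (intro sum.mono_neutral_left) (auto simp: carlitz_coeff_eq_0)
  then have "lin_ext (carlitz_at_1 q t) g = (\<Sum>i\<le>degree g. \<Sum>k\<le>degree g. coeff g i * carlitz_coeff q t i k)"
    by (simp add: lin_ext_def sum_distrib_left)
  also have "\<dots> = (\<Sum>k\<le>degree g. \<Sum>i\<le>degree g. coeff g i * carlitz_coeff q t i k)"
    by (rule sum.swap)
  finally show ?thesis
    by (simp add: carlitz_poly_coeff_def lin_ext_def)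
qed

lemma lin_ext_carlitz_at_1_deriv_linear_times:
  "lin_ext (carlitz_at_1_deriv q t) ([:- t, 1:] * h) = lin_ext (carlitz_at_1 q t) h"
proof -
  have "[:- t, 1:] * h = pCons 0 h - smult t h"
    by simp
  then show ?thesis
    by (simp add: lin_ext_diff lin_ext_smult lin_ext_pCons_0 lin_ext_fun_add lin_ext_fun_mult_left)
qed

lemma sum_eq_Fseq_of_recurrence:
  fixes v :: "nat \<Rightarrow> 'a::comm_ring_1"
  assumes "\<And>k. 0 < k \<Longrightarrow> k \<le> m \<Longrightarrow> v (k - 1) = (t - t ^ q ^ k) * v k" "j \<le> m"
  shows "(\<Sum>k\<le>j. v k) = v j * ((-1) ^ j * poly (Fseq q j) t)"
  using assms(2)
proof (induction j)
  case (Suc j)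
  have v_j: "v j = (t - t ^ q ^ Suc j) * v (Suc j)"
    using assms(1)[of "Suc j"] Suc.prems by simp
  have sign: "(-1::'a) ^ j * (-1) ^ j = 1"
    by (simp flip: power_mult_distrib)
  have "(\<Sum>k\<le>Suc j. v k) = v j * ((-1) ^ j * poly (Fseq q j) t) + v (Suc j)"
    using Suc by simp
  also have "\<dots> = v (Suc j) * ((-1) ^ Suc j * poly (Fseq q (Suc j)) t)"
    unfolding v_j by (simp add: poly_monom algebra_simps sign)
  finally show ?case .
qed simp

lemma lin_ext_carlitz_at_1_cofactor:
  assumes "degree h = m" "lead_coeff h = 1"
    and "\<And>k. 0 < k \<Longrightarrow> k \<le> m \<Longrightarrow> carlitz_poly_coeff q t ([:- t, 1:] * h) k = 0"
  shows "lin_ext (carlitz_at_1 q t) h = (-1) ^ m * poly (Fseq q m) t"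
proof -
  define v where "v = carlitz_poly_coeff q t h"
  have "carlitz_poly_coeff q t ([:- t, 1:] * h) = (\<lambda>k. comp_T q t v k - t * v k)"
    using carlitz_poly_coeff_pCons_0[of q t h] carlitz_poly_coeff_add[of q t "pCons 0 h" "smult (- t) h"]
      carlitz_poly_coeff_smult[of q t "- t" h]
    by (simp add: v_def fun_eq_iff)
  then have "v (k - 1) = (t - t ^ q ^ k) * v k" if "0 < k" "k \<le> m" for k
    using assms(3)[OF that] that by (simp add: comp_T_def algebra_simps)
  moreover have "v m = 1"
    using carlitz_poly_coeff_degree[of q t h] assms(1,2) by (simp add: v_def)
  ultimately show ?thesis
    using sum_eq_Fseq_of_recurrence[of m v t q m] assms(1) by (simp add: lin_ext_carlitz_at_1 v_def)
qed

lemma pderiv_sum: "pderiv (sum f A) = (\<Sum>x\<in>A. pderiv (f x))"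
  using higher_pderiv_sum[of 1 f A] by simp

context field_extension
begin

lemma T_comp_comp_T: "T_comp q t (comp_T q t u) = comp_T q t (T_comp q t (u :: nat \<Rightarrow> 'L))"
proof
  fix k
  show "T_comp q t (comp_T q t u) k = comp_T q t (T_comp q t u) k"
  proof (cases k)
    case (Suc j)
    have "(if j = 0 then 0 else u (j - 1)) ^ q = (if j = 0 then 0 else u (j - 1) ^ q)"
      using q_ge_2 by simp
    moreover have "(t ^ q ^ j) ^ q = t ^ q ^ Suc j"
      using power_q_power_q[of t j 1] by simp
    ultimately show ?thesis
      using Suc by (simp add: T_comp_def comp_T_def frob_add power_mult_distrib algebra_simps)
  qed (simp add: T_comp_def comp_T_def)
qed

lemma carlitz_coeff_Suc_left: "carlitz_coeff q t (Suc i) = T_comp q (t::'L) (carlitz_coeff q t i)"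
proof (induction i)
  case 0
  show ?case
    using q_ge_2 by (auto simp: T_comp_def comp_T_def)
next
  case (Suc i)
  have "carlitz_coeff q t (Suc (Suc i)) = comp_T q t (T_comp q t (carlitz_coeff q t i))"
    using Suc by simp
  also have "\<dots> = T_comp q t (carlitz_coeff q t (Suc i))"
    by (simp add: T_comp_comp_T)
  finally show ?case .
qed

lemma carlitz_at_1_0 [simp]: "carlitz_at_1 q t 0 = 1"
  by (simp add: carlitz_at_1_def)

lemma carlitz_at_1_Suc: "carlitz_at_1 q t (Suc i) = carlitz_at_1 q t i ^ q + t * carlitz_at_1 q (t::'L) i"
proof -
  have "carlitz_at_1 q t (Suc i) = (\<Sum>k\<le>Suc i. T_comp q t (carlitz_coeff q t i) k)"
    by (simp only: carlitz_at_1_def carlitz_coeff_Suc_left)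
  also have "\<dots> = (\<Sum>k\<le>i. carlitz_coeff q t i k ^ q) + t * (\<Sum>k\<le>Suc i. carlitz_coeff q t i k)"
    by (simp add: T_comp_def sum.distrib sum_distrib_left distrib_left sum.atMost_Suc_shift
        del: sum.atMost_Suc)
  also have "\<dots> = carlitz_at_1 q t i ^ q + t * carlitz_at_1 q t i"
    using frob_sum_power[of "carlitz_coeff q t i" "{..i}" 1] by (simp add: carlitz_at_1_def carlitz_coeff_eq_0)
  finally show ?thesis .
qed

lemma T_comp_carlitz_poly_coeff:
  assumes "\<And>i. coeff g i ^ q = coeff g i"
  shows "T_comp q t (carlitz_poly_coeff q t g) = carlitz_poly_coeff q (t::'L) (pCons 0 g)"
proof
  fix k
  have power_q: "lin_ext (\<lambda>i. carlitz_coeff q t i j) g ^ q = lin_ext (\<lambda>i. carlitz_coeff q t i j ^ q) g" for j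
    using frob_sum_power[of "\<lambda>i. coeff g i * carlitz_coeff q t i j" "{..degree g}" 1]
    by (simp add: lin_ext_def power_mult_distrib assms)
  have "T_comp q t (carlitz_poly_coeff q t g) k = lin_ext (\<lambda>i. T_comp q t (carlitz_coeff q t i) k) g"
    by (cases k) (simp_all add: T_comp_def power_q carlitz_poly_coeff_def lin_ext_fun_add lin_ext_fun_mult_left)
  also have "\<dots> = carlitz_poly_coeff q t (pCons 0 g) k"
    by (simp add: carlitz_poly_coeff_def lin_ext_pCons_0 flip: carlitz_coeff_Suc_left)
  finally show "T_comp q t (carlitz_poly_coeff q t g) k = carlitz_poly_coeff q t (pCons 0 g) k" .
qed

text \<open>For an additive polynomial with coefficients in \<open>k\<close> this says \<open>\<rho>\<^sub>g(X) = X^(q^(deg g))\<close>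
  when \<open>T\<close> is specialised to a root \<open>t\<close> of \<open>g\<close>: comparing \<open>\<rho>\<^sub>T \<circ> \<rho>\<^sub>g = \<rho>\<^sub>g \<circ> \<rho>\<^sub>T\<close>
  coefficientwise kills the coefficients one by one, because \<open>t^(q^k) \<noteq> t\<close>.\<close>
lemma carlitz_poly_coeff_of_root:
  assumes "\<And>i. coeff g i ^ q = coeff g i" "lead_coeff g = 1" "poly g t = 0"
    and "\<And>j. 0 < j \<Longrightarrow> j < degree g \<Longrightarrow> t ^ q ^ j \<noteq> (t::'L)"
  shows "carlitz_poly_coeff q t g k = (if k = degree g then 1 else 0)"
proof -
  let ?c = "carlitz_poly_coeff q t g"
  have step: "?c k ^ q + t * ?c (Suc k) = ?c k + ?c (Suc k) * t ^ q ^ Suc k" for k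
    using fun_cong[OF T_comp_carlitz_poly_coeff[OF assms(1), of t], of "Suc k"]
      fun_cong[OF carlitz_poly_coeff_pCons_0[of q t g], of "Suc k"]
    by (simp add: T_comp_def comp_T_def)
  have "?c k = 0" if "k < degree g" for k
    using that
  proof (induction k)
    case 0
    then show ?case
      using assms(3) by (simp add: carlitz_poly_coeff_0)
  next
    case (Suc k)
    then have "t * ?c (Suc k) = ?c (Suc k) * t ^ q ^ Suc k"
      using step[of k] q_ge_2 by (simp add: power_0_left)
    then have "?c (Suc k) * (t - t ^ q ^ Suc k) = 0"
      by (metis mult.commute right_diff_distrib right_minus_eq)
    then show ?case
      using assms(4)[of "Suc k"] Suc.prems by simp
  qed
  then show ?thesis
    using carlitz_poly_coeff_degree[of q t g] carlitz_poly_coeff_eq_0[of g] assms(2)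
    by (metis linorder_neqE_nat)
qed

lemma of_nat_q_eq_0: "of_nat q = (0::'k)"
  using of_nat_card_choose_eq_0[of 1, where 'a = 'k] q_ge_2 card_k by simp

lemma poly_carlitz_T_power: "poly (map_poly \<phi> ((carlitz_T q ^^ i) 1)) t = carlitz_at_1 q t i"
  by (induction i) (simp_all add: carlitz_T_def carlitz_at_1_Suc poly_monom)

lemma poly_pderiv_carlitz_T_power:
  "poly (map_poly \<phi> (pderiv ((carlitz_T q ^^ i) 1))) t = carlitz_at_1_deriv q t i"
proof (induction i)
  case (Suc i)
  let ?C = "(carlitz_T q ^^ i) (1 :: 'k poly)"
  have "pderiv (?C ^ q) = 0"
    using pderiv_power_Suc[of ?C "q - 1"] q_ge_2 of_nat_q_eq_0 by simp
  then have "pderiv ((carlitz_T q ^^ Suc i) 1) = monom 1 1 * pderiv ?C + ?C"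
    by (simp add: carlitz_T_def pderiv_add pderiv_mult pderiv_monom)
  then show ?case
    using Suc by (simp add: poly_monom poly_carlitz_T_power phi.map_poly_pderiv)
qed simp

lemma poly_carlitz: "poly (map_poly \<phi> (carlitz q N 1)) t = lin_ext (carlitz_at_1 q t) (map_poly \<phi> N)"
  by (simp add: carlitz_def poly_sum poly_carlitz_T_power lin_ext_def coeff_map_poly)

lemma poly_pderiv_carlitz:
  "poly (map_poly \<phi> (pderiv (carlitz q N 1))) t = lin_ext (carlitz_at_1_deriv q t) (map_poly \<phi> N)"
  by (simp add: carlitz_def pderiv_sum pderiv_smult poly_sum poly_pderiv_carlitz_T_power lin_ext_def
      coeff_map_poly)

end

section \<open>The Wieferich criterion\<close>

lemma conjugates_poly_Suc: "conjugates_poly q \<theta> (Suc m) = [:- \<theta>, 1:] * conjugates_poly q (\<theta> ^ q) m"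
  unfolding conjugates_poly_def prod.lessThan_Suc_shift by (simp add: power_mult)

lemma square_dvd_iff_dvd_pderiv:
  fixes P f :: "'a::field poly"
  assumes "prime_elem P" "P dvd f" "\<not> P dvd pderiv P"
  shows "P ^ 2 dvd f \<longleftrightarrow> P dvd pderiv f"
proof -
  obtain g where f: "f = P * g"
    using assms(2) by (rule dvdE)
  have "P \<noteq> 0"
    using assms(1) by (simp add: prime_elem_def)
  then have "P ^ 2 dvd f \<longleftrightarrow> P dvd g"
    by (simp add: f power2_eq_square)
  also have "\<dots> \<longleftrightarrow> P dvd pderiv P * g"
    using assms(1,3) by (simp add: prime_elem_dvd_mult_iff)
  also have "\<dots> \<longleftrightarrow> P dvd P * pderiv g + pderiv P * g"
    by (simp add: dvd_add_right_iff)
  also have "P * pderiv g + pderiv P * g = pderiv f"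
    by (simp add: f pderiv_mult algebra_simps)
  finally show ?thesis .
qed

context field_extension
begin

context
  fixes P :: "'k poly" and \<theta> :: 'L
  assumes irreducible: "irreducible P" and monic: "lead_coeff P = 1"
    and root: "poly (map_poly \<phi> P) \<theta> = 0"
begin

lemma degree_pos: "degree P > 0"
  using irreducible by (auto simp: irreducible_def is_unit_iff_degree)

lemma map_poly_eq_linear_times_cofactor:
  "map_poly \<phi> P = [:- \<theta>, 1:] * conjugates_poly q (\<theta> ^ q) (degree P - 1)"
  using map_poly_irreducible_eq_conjugates_poly[OF irreducible monic root] degree_pos
  by (metis Suc_diff_1 conjugates_poly_Suc)

lemma poly_cofactor_ne_0: "poly (conjugates_poly q (\<theta> ^ q) (degree P - 1)) \<theta> \<noteq> 0"
proof
  assume "poly (conjugates_poly q (\<theta> ^ q) (degree P - 1)) \<theta> = 0"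
  then obtain i where "i < degree P - 1" "\<theta> = (\<theta> ^ q) ^ q ^ i"
    by (auto simp: poly_conjugates_poly_eq_0_iff)
  moreover from this have "Suc i < degree P"
    by linarith
  ultimately show False
    using frob_power_ne_if_less_degree[OF irreducible root, of "Suc i"] power_q_power_q[of \<theta> 1 i]
    by simp
qed

lemma not_dvd_pderiv: "\<not> P dvd pderiv P"
proof
  assume "P dvd pderiv P"
  then have "poly (pderiv (map_poly \<phi> P)) \<theta> = 0"
    by (simp add: irreducible_dvd_iff_root[OF irreducible root] flip: phi.map_poly_pderiv)
  then show False
    using poly_cofactor_ne_0
    by (simp add: map_poly_eq_linear_times_cofactor pderiv_pCons pderiv_diff pderiv_smult)
qed

lemma carlitz_poly_coeff_map_poly:
  "carlitz_poly_coeff q \<theta> (map_poly \<phi> P) k = (if k = degree P then 1 else 0)"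
  using carlitz_poly_coeff_of_root[of "map_poly \<phi> P" \<theta> k] monic root
    frob_power_ne_if_less_degree[OF irreducible root] phi_power_q_power[of _ 1]
  by (simp add: coeff_map_poly)

lemma dvd_carlitz_pred: "P dvd carlitz q (P - 1) 1"
proof -
  have "lin_ext (carlitz_at_1 q \<theta>) (map_poly \<phi> P) = 1"
    by (simp add: lin_ext_carlitz_at_1 carlitz_poly_coeff_map_poly)
  then show ?thesis
    by (simp add: irreducible_dvd_iff_root[OF irreducible root] poly_carlitz lin_ext_diff)
qed

lemma poly_pderiv_carlitz_pred:
  "poly (map_poly \<phi> (pderiv (carlitz q (P - 1) 1))) \<theta> =
    (-1) ^ (degree P - 1) * poly (Fseq q (degree P - 1)) \<theta>"
proof -
  let ?h = "conjugates_poly q (\<theta> ^ q) (degree P - 1)"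
  have "poly (map_poly \<phi> (pderiv (carlitz q (P - 1) 1))) \<theta> = lin_ext (carlitz_at_1 q \<theta>) ?h"
    by (simp add: poly_pderiv_carlitz lin_ext_diff map_poly_eq_linear_times_cofactor
        lin_ext_carlitz_at_1_deriv_linear_times del: mult_pCons_left)
  also have "\<dots> = (-1) ^ (degree P - 1) * poly (Fseq q (degree P - 1)) \<theta>"
  proof (rule lin_ext_carlitz_at_1_cofactor)
    fix k assume "0 < k" "k \<le> degree P - 1"
    then show "carlitz_poly_coeff q \<theta> ([:- \<theta>, 1:] * ?h) k = 0"
      using carlitz_poly_coeff_map_poly[of k] degree_pos
      unfolding map_poly_eq_linear_times_cofactor by auto
  qed (use lead_coeff_conjugates_poly[of q "\<theta> ^ q" "degree P - 1"] in simp_all)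
  finally show ?thesis .
qed

theorem square_dvd_carlitz_pred_iff:
  "P ^ 2 dvd carlitz q (P - 1) 1 \<longleftrightarrow> poly (Fseq q (degree P - 1)) \<theta> = 0"
  using field_poly_irreducible_imp_prime[OF irreducible] dvd_carlitz_pred not_dvd_pderiv
  by (simp add: square_dvd_iff_dvd_pderiv irreducible_dvd_iff_root[OF irreducible root]
      poly_pderiv_carlitz_pred)

end

end

section \<open>Artin--Schreier polynomials and the set \<open>B\<^sub>q\<^sub>,\<^sub>s\<^sub>,\<^sub>0\<close>\<close>

definition artin_schreier_poly :: "nat \<Rightarrow> 'a::comm_ring_1 \<Rightarrow> 'a poly" where
  "artin_schreier_poly q b = monom 1 q - monom 1 1 - [:b:]"

lemma poly_artin_schreier_poly [simp]: "poly (artin_schreier_poly q b) x = x ^ q - x - b"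
  by (simp add: artin_schreier_poly_def poly_monom)

lemma R_poly_eq_prod: "R_poly q s \<alpha> = (\<Prod>i=1..s. artin_schreier_poly q (\<alpha> ^ q ^ i))"
  by (simp add: R_poly_def artin_schreier_poly_def)

lemma (in field_hom) map_poly_artin_schreier_poly:
  "map_poly h (artin_schreier_poly q b) = artin_schreier_poly q (h b)"
  by (simp add: artin_schreier_poly_def)

lemma (in field_hom) map_poly_Fseq [simp]: "map_poly h (Fseq q n) = Fseq q n"
  by (induction n) simp_all

lemma prod_linear_dvd_of_roots:
  fixes p :: "'a::field poly"
  assumes "finite S" "\<And>x. x \<in> S \<Longrightarrow> poly p x = 0"
  shows "(\<Prod>x\<in>S. [:- x, 1:]) dvd p"
  using assms
proof (induction S arbitrary: p rule: finite_induct)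
  case (insert x S)
  obtain p' where p: "p = [:- x, 1:] * p'"
    using insert.prems by (meson insertI1 poly_eq_0_iff_dvd dvdE)
  have "(\<Prod>x\<in>S. [:- x, 1:]) dvd p'"
    using insert by (intro insert.IH) (force simp: p)
  then show ?case
    using insert.hyps by (simp add: p mult_dvd_mono del: mult_pCons_left)
qed simp

definition B_member :: "('k::{finite,field} \<Rightarrow> 'L::{finite,field}) \<Rightarrow> nat \<Rightarrow> 'L \<Rightarrow> bool" where
  "B_member \<phi> s \<alpha> \<longleftrightarrow> alg_degree \<phi> \<alpha> = s \<and> trace_ext CARD('k) s \<alpha> = 0 \<and>
     artin_schreier_poly CARD('k) \<alpha> dvd Fseq CARD('k) (s - 1)"

context field_extension
begin

lemma B_member_iff:
  "B_member \<phi> s \<alpha> \<longleftrightarrow> alg_degree \<phi> \<alpha> = s \<and> trace_ext q s \<alpha> = 0 \<and>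
     artin_schreier_poly q \<alpha> dvd Fseq q (s - 1)"
  by (simp add: B_member_def card_k)

lemma alg_degree_eq_s_iff:
  "alg_degree \<phi> \<alpha> = s \<longleftrightarrow> (\<forall>j. 0 < j \<and> j < s \<longrightarrow> \<alpha> ^ q ^ j \<noteq> (\<alpha>::'L))"
  using alg_degree_eq_iff[OF power_q_power_s s_pos] .

lemma B_member_frob_power:
  assumes "B_member \<phi> s \<alpha>"
  shows "B_member \<phi> s (\<alpha> ^ q ^ n)"
proof -
  interpret frob: field_hom "\<lambda>x::'L. x ^ q ^ n"
    by (rule field_hom_frob)
  have "(\<alpha> ^ q ^ n) ^ q ^ j = \<alpha> ^ q ^ n \<longleftrightarrow> \<alpha> ^ q ^ j = \<alpha>" for j
    by (metis add.commute frob_power_eq_iff power_q_power_q)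
  moreover have "trace_ext q s (\<alpha> ^ q ^ n) = trace_ext q s \<alpha> ^ q ^ n"
    by (simp add: trace_ext_def frob_sum_power power_q_power_q add.commute)
  moreover have "artin_schreier_poly q (\<alpha> ^ q ^ n) dvd Fseq q (s - 1)"
    if "artin_schreier_poly q \<alpha> dvd Fseq q (s - 1)"
    using frob.map_poly_dvd_iff[of "artin_schreier_poly q \<alpha>" "Fseq q (s - 1)"] that
    by (simp add: frob.map_poly_artin_schreier_poly)
  ultimately show ?thesis
    using assms q_ge_2 by (simp add: B_member_iff alg_degree_eq_s_iff)
qed

lemma B_set_eq: "B_set \<phi> s = frob_class q ` {\<alpha>. B_member \<phi> s \<alpha>}"
  by (auto simp: B_set_def B_member_def artin_schreier_poly_def card_k)

lemma bex_B_set_iff: "(\<exists>C\<in>B_set \<phi> s. \<exists>\<alpha>\<in>C. Q \<alpha>) \<longleftrightarrow> (\<exists>\<alpha>. B_member \<phi> s \<alpha> \<and> Q \<alpha>)"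
proof
  assume "\<exists>C\<in>B_set \<phi> s. \<exists>\<alpha>\<in>C. Q \<alpha>"
  then obtain \<alpha>0 n where "B_member \<phi> s \<alpha>0" "Q (\<alpha>0 ^ q ^ n)"
    by (auto simp: B_set_eq frob_class_def)
  then show "\<exists>\<alpha>. B_member \<phi> s \<alpha> \<and> Q \<alpha>"
    using B_member_frob_power by blast
next
  assume "\<exists>\<alpha>. B_member \<phi> s \<alpha> \<and> Q \<alpha>"
  moreover have "\<alpha> \<in> frob_class q \<alpha>" for \<alpha> :: 'L
    by (auto simp: frob_class_def intro: exI[of _ 0])
  ultimately show "\<exists>C\<in>B_set \<phi> s. \<exists>\<alpha>\<in>C. Q \<alpha>"
    by (auto simp: B_set_eq)
qed

lemma frob_diff_power_commute: "(\<theta> ^ q - \<theta>) ^ q ^ j = (\<theta> ^ q ^ j) ^ q - (\<theta>::'L) ^ q ^ j"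
  using frob_diff_power[of "\<theta> ^ q" \<theta> j] power_q_power_q[of \<theta> 1 j] power_q_power_q[of \<theta> j 1]
  by (simp add: add.commute)

lemma frob_power_diff_in_range_iff:
  "\<theta> ^ q ^ j - \<theta> \<in> range \<phi> \<longleftrightarrow> (\<theta> ^ q - \<theta>) ^ q ^ j = \<theta> ^ q - (\<theta>::'L)"
proof -
  have "(\<theta> ^ q ^ j - \<theta>) ^ q = (\<theta> ^ q ^ j) ^ q - \<theta> ^ q"
    using frob_diff_power[of "\<theta> ^ q ^ j" \<theta> 1] by simp
  moreover have "(x - y = z - w) \<longleftrightarrow> (x - z = y - w)" for x y z w :: 'L
    by (auto simp: algebra_simps)
  ultimately show ?thesis
    unfolding range_phi_iff frob_diff_power_commute by metis
qed

lemma artin_schreier_poly_eq_prod: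
  assumes "\<theta> ^ q - \<theta> = \<beta>"
  shows "artin_schreier_poly q \<beta> = (\<Prod>a\<in>UNIV. [:- (\<theta> + \<phi> a), 1::'L:])"
proof -
  have "inj (\<lambda>a. \<theta> + \<phi> a)"
    using phi.hom_inj by (auto simp: inj_def)
  then have "card ((\<lambda>a. \<theta> + \<phi> a) ` UNIV) = q"
    by (simp add: card_image card_k)
  moreover have "degree (artin_schreier_poly q \<beta>) = q"
    using q_ge_2 by (intro antisym degree_le le_degree) (auto simp: artin_schreier_poly_def coeff_pCons split: nat.split)
  moreover have "coeff (artin_schreier_poly q \<beta>) q = 1"
    using q_ge_2 by (simp add: artin_schreier_poly_def coeff_pCons split: nat.split)
  moreover have "lead_coeff (\<Prod>a\<in>UNIV. [:- (\<theta> + \<phi> a), 1::'L:]) = 1"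
    by (simp only: lead_coeff_prod) simp
  moreover have "degree (\<Prod>a\<in>UNIV. [:- (\<theta> + \<phi> a), 1::'L:]) = q"
    by (simp add: degree_prod_eq_sum_degree card_k)
  moreover have "poly (artin_schreier_poly q \<beta>) (\<theta> + \<phi> a) = 0" for a
  proof -
    have "(\<theta> + \<phi> a) ^ q = \<theta> ^ q + \<phi> a"
      using frob_add[of \<theta> "\<phi> a"] phi_power_q_power[of a 1] by simp
    then show ?thesis
      using assms by simp
  qed
  ultimately show ?thesis
    by (intro poly_eqI_degree_lead_coeff[of _ q _ "(\<lambda>a. \<theta> + \<phi> a) ` UNIV"]) (auto simp: poly_prod)
qed

lemma poly_Fseq_add_phi: "poly (Fseq q n) (x + \<phi> a) = poly (Fseq q n) (x::'L)"
proof (induction n)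
  case (Suc n)
  have "(x + \<phi> a) ^ q ^ Suc n = x ^ q ^ Suc n + \<phi> a"
    using frob_add_power[of x "\<phi> a" "Suc n"] phi_power_q_power[of a "Suc n"] by simp
  with Suc show ?case
    by (simp add: poly_monom)
qed simp

lemma artin_schreier_poly_dvd_Fseq_iff:
  assumes "\<theta> ^ q - \<theta> = \<beta>"
  shows "artin_schreier_poly q \<beta> dvd Fseq q n \<longleftrightarrow> poly (Fseq q n) (\<theta>::'L) = 0"
proof
  assume "poly (Fseq q n) \<theta> = 0"
  then have "(\<Prod>x\<in>range (\<lambda>a. \<theta> + \<phi> a). [:- x, 1:]) dvd Fseq q n"
    by (intro prod_linear_dvd_of_roots) (auto simp: poly_Fseq_add_phi)
  moreover have "inj (\<lambda>a. \<theta> + \<phi> a)"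
    using phi.hom_inj by (auto simp: inj_def)
  ultimately show "artin_schreier_poly q \<beta> dvd Fseq q n"
    by (simp add: artin_schreier_poly_eq_prod[OF assms] prod.reindex)
qed (use assms in auto)

lemma R_poly_in_range: "R_poly q s (\<alpha>::'L) \<in> range (map_poly \<phi>)"
proof -
  interpret frob: field_hom "\<lambda>x::'L. x ^ q"
    using field_hom_frob[of 1] by simp
  have "R_poly q s \<alpha> = (\<Prod>i<s. artin_schreier_poly q (\<alpha> ^ q ^ Suc i))"
    by (simp add: R_poly_eq_prod prod.atLeast1_atMost_eq del: power_Suc)
  also have "\<dots> = (\<Prod>i<s. artin_schreier_poly q (\<alpha> ^ q ^ i))"
    by (rule prod_lessThan_Suc_cyclic[where f = "\<lambda>i. artin_schreier_poly q (\<alpha> ^ q ^ i)"]) simp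
  finally have R: "R_poly q s \<alpha> = (\<Prod>i<s. artin_schreier_poly q (\<alpha> ^ q ^ i))" .
  have "map_poly (\<lambda>x. x ^ q) (R_poly q s \<alpha>) = (\<Prod>i<s. artin_schreier_poly q (\<alpha> ^ q ^ Suc i))"
    unfolding R using power_q_power_q[of \<alpha> _ 1]
    by (simp add: frob.map_poly_artin_schreier_poly del: power_Suc)
  also have "\<dots> = R_poly q s \<alpha>"
    unfolding R by (rule prod_lessThan_Suc_cyclic[where f = "\<lambda>i. artin_schreier_poly q (\<alpha> ^ q ^ i)"]) simp
  finally show ?thesis
    by (rule frob_fixed_poly_in_range)
qed

lemma exists_root_of_dvd_R_poly:
  assumes "p dvd R_poly q s \<alpha>" "degree p > 0" "B_member \<phi> s \<alpha>"
  shows "\<exists>\<theta> i. poly p \<theta> = 0 \<and> \<theta> ^ q - \<theta> = \<alpha> ^ q ^ i"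
proof -
  have "\<forall>i. \<exists>\<theta>. \<theta> ^ q - \<theta> = \<alpha> ^ q ^ i"
  proof
    fix i
    have "\<alpha> ^ q ^ i \<in> range (\<lambda>x. x ^ q - x)"
      using B_member_frob_power[OF assms(3), of i] by (simp add: range_frob_diff B_member_iff)
    then show "\<exists>\<theta>. \<theta> ^ q - \<theta> = \<alpha> ^ q ^ i"
      by (auto intro: sym)
  qed
  from choice[OF this] obtain \<theta> where "\<forall>i. \<theta> i ^ q - \<theta> i = \<alpha> ^ q ^ i" ..
  then have \<theta>: "\<theta> i ^ q - \<theta> i = \<alpha> ^ q ^ i" for i
    by blast
  have "R_poly q s \<alpha> = (\<Prod>i\<in>{1..s}. \<Prod>a\<in>UNIV. [:- (\<theta> i + \<phi> a), 1:])"
    by (simp add: R_poly_eq_prod artin_schreier_poly_eq_prod[OF \<theta>])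
  also have "\<dots> = (\<Prod>x\<in>{1..s} \<times> UNIV. [:- (\<theta> (fst x) + \<phi> (snd x)), 1:])"
    by (subst prod.cartesian_product) (simp add: case_prod_beta)
  finally have "p dvd (\<Prod>x\<in>{1..s} \<times> UNIV. [:- (\<theta> (fst x) + \<phi> (snd x)), 1:])"
    using assms(1) by simp
  from root_of_dvd_prod_linear[OF this _ assms(2)]
  obtain i a where "poly p (\<theta> i + \<phi> a) = 0"
    by auto
  moreover have "(\<theta> i + \<phi> a) ^ q - (\<theta> i + \<phi> a) = \<alpha> ^ q ^ i"
    using \<theta>[of i] frob_add[of "\<theta> i" "\<phi> a"] phi_power_q_power[of a 1] by simp
  ultimately show ?thesis
    by (intro exI conjI)
qed

context
  fixes P :: "'k poly" and \<theta> :: 'L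
  assumes irreducible: "irreducible P" and monic: "lead_coeff P = 1"
    and root: "poly (map_poly \<phi> P) \<theta> = 0"
begin

lemma pcompose_shift_eq_iff_root: "pcompose P [:a, 1:] = P \<longleftrightarrow> poly (map_poly \<phi> P) (\<theta> + \<phi> a) = 0"
proof
  assume "poly (map_poly \<phi> P) (\<theta> + \<phi> a) = 0"
  then have "P dvd pcompose P [:a, 1:]"
    by (simp add: irreducible_dvd_iff_root[OF irreducible root] phi.map_poly_pcompose poly_pcompose
        add.commute)
  moreover have "lead_coeff (pcompose P [:a, 1:]) = 1"
    using monic by (subst lead_coeff_comp) simp_all
  ultimately show "pcompose P [:a, 1:] = P"
    using monic by (intro monic_dvd_imp_eq[symmetric]) (simp_all add: degree_pcompose)
next
  assume "pcompose P [:a, 1:] = P"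
  then have "poly (map_poly \<phi> (pcompose P [:a, 1:])) \<theta> = 0"
    using root by simp
  then show "poly (map_poly \<phi> P) (\<theta> + \<phi> a) = 0"
    by (simp add: phi.map_poly_pcompose poly_pcompose add.commute)
qed

lemma translate_to_conjugate_iff:
  assumes "degree P = s"
  shows "(\<forall>a j. j < s \<and> \<theta> + \<phi> a = \<theta> ^ q ^ j \<longrightarrow> a = 0) \<longleftrightarrow>
    (\<forall>j. 0 < j \<and> j < s \<longrightarrow> \<theta> ^ q ^ j - \<theta> \<notin> range \<phi>)"
proof (intro iffI allI impI)
  fix j assume fixed: "\<forall>a j. j < s \<and> \<theta> + \<phi> a = \<theta> ^ q ^ j \<longrightarrow> a = 0" and j: "0 < j \<and> j < s"
  show "\<theta> ^ q ^ j - \<theta> \<notin> range \<phi>"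
  proof
    assume "\<theta> ^ q ^ j - \<theta> \<in> range \<phi>"
    then obtain a where "\<theta> ^ q ^ j - \<theta> = \<phi> a"
      by auto
    then have a: "\<theta> + \<phi> a = \<theta> ^ q ^ j"
      by (simp add: algebra_simps)
    with fixed j have "a = 0"
      by blast
    with a show False
      using frob_power_ne_if_less_degree[OF irreducible root, of j] j assms by simp
  qed
next
  fix a j assume shifts: "\<forall>j. 0 < j \<and> j < s \<longrightarrow> \<theta> ^ q ^ j - \<theta> \<notin> range \<phi>"
    and j: "j < s \<and> \<theta> + \<phi> a = \<theta> ^ q ^ j"
  have "\<theta> ^ q ^ j - \<theta> = \<phi> a"
    using j by (simp add: algebra_simps)
  then have "\<theta> ^ q ^ j - \<theta> \<in> range \<phi>"
    by (metis rangeI)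
  with shifts j have "j = 0"
    by auto
  with j show "a = 0"
    by simp
qed

text \<open>A translate \<open>P(X + a)\<close> equal to \<open>P\<close> moves the root \<open>\<theta>\<close> to a conjugate \<open>\<theta>^(q^j)\<close>,
  and \<open>\<theta>^(q^j) - \<theta> \<in> k\<close> exactly when \<open>\<theta>^q - \<theta>\<close> is fixed by the \<open>j\<close>-th Frobenius power.\<close>
lemma non_fixed_iff_alg_degree:
  assumes "degree P = s"
  shows "non_fixed P \<longleftrightarrow> alg_degree \<phi> (\<theta> ^ q - \<theta>) = s"
proof -
  have roots: "poly (map_poly \<phi> P) x = 0 \<longleftrightarrow> (\<exists>j<s. x = \<theta> ^ q ^ j)" for x
    using map_poly_irreducible_eq_conjugates_poly[OF irreducible monic root] assms
    by (simp add: poly_conjugates_poly_eq_0_iff)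
  have "non_fixed P \<longleftrightarrow> (\<forall>a j. j < s \<and> \<theta> + \<phi> a = \<theta> ^ q ^ j \<longrightarrow> a = 0)"
    by (auto simp: non_fixed_def pcompose_shift_eq_iff_root roots)
  also have "\<dots> \<longleftrightarrow> (\<forall>j. 0 < j \<and> j < s \<longrightarrow> \<theta> ^ q ^ j - \<theta> \<notin> range \<phi>)"
    by (rule translate_to_conjugate_iff[OF assms])
  also have "\<dots> \<longleftrightarrow> alg_degree \<phi> (\<theta> ^ q - \<theta>) = s"
    by (simp add: alg_degree_eq_s_iff frob_power_diff_in_range_iff)
  finally show ?thesis .
qed

end

lemma c_wieferich_iff:
  assumes "irreducible P" "lead_coeff P = 1" "poly (map_poly \<phi> P) \<theta> = 0" "degree P = s"
  shows "c_wieferich P \<longleftrightarrow> poly (Fseq q (s - 1)) \<theta> = 0"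
  using square_dvd_carlitz_pred_iff[OF assms(1-3)] assms by (simp add: c_wieferich_def card_k)

lemma B_member_of_wieferich:
  assumes "c_wieferich P" "non_fixed P" "degree P = s"
  shows "\<exists>\<alpha>. B_member \<phi> s \<alpha> \<and> (\<exists>R. map_poly \<phi> R = R_poly q s \<alpha> \<and> P dvd R)"
proof -
  have irreducible: "irreducible P" and monic: "lead_coeff P = 1"
    using assms(1) by (simp_all add: c_wieferich_def)
  obtain \<theta> where root: "poly (map_poly \<phi> P) \<theta> = 0"
    using exists_root_irreducible[OF irreducible assms(3)] by blast
  define \<alpha> where "\<alpha> = \<theta> ^ q - \<theta>"
  have "B_member \<phi> s \<alpha>"
    using non_fixed_iff_alg_degree[OF irreducible monic root assms(3)] trace_ext_frob_diff[of \<theta>]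
      artin_schreier_poly_dvd_Fseq_iff[of \<theta> \<alpha>] c_wieferich_iff[OF irreducible monic root assms(3)] assms(1,2)
    by (simp add: B_member_iff \<alpha>_def)
  moreover obtain R where R: "map_poly \<phi> R = R_poly q s \<alpha>"
    using R_poly_in_range by (metis imageE)
  moreover have "P dvd R"
    using s_pos by (auto simp: irreducible_dvd_iff_root[OF irreducible root] R R_poly_eq_prod poly_prod
        \<alpha>_def intro!: bexI[of _ s])
  ultimately show ?thesis
    by blast
qed

lemma wieferich_of_B_member:
  assumes "irreducible P" "lead_coeff P = 1" "B_member \<phi> s \<alpha>"
    and "map_poly \<phi> R = R_poly q s \<alpha>" "P dvd R"
  shows "c_wieferich P \<and> non_fixed P \<and> degree P = s"
proof -
  have "map_poly \<phi> P dvd R_poly q s \<alpha>"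
    using assms(4,5) phi.map_poly_dvd_iff by metis
  moreover have "degree (map_poly \<phi> P) > 0"
    using assms(1) by (auto simp: irreducible_def is_unit_iff_degree)
  ultimately obtain \<theta> i where root: "poly (map_poly \<phi> P) \<theta> = 0" and \<theta>: "\<theta> ^ q - \<theta> = \<alpha> ^ q ^ i"
    using exists_root_of_dvd_R_poly assms(3) by blast
  define \<beta> where "\<beta> = \<alpha> ^ q ^ i"
  have \<beta>: "B_member \<phi> s \<beta>"
    unfolding \<beta>_def by (rule B_member_frob_power[OF assms(3)])
  have "degree P = s"
  proof (rule degree_irreducible_eq_frob_period[OF assms(1) root power_q_power_s s_pos])
    fix j assume j: "0 < j" "j < s"
    show "\<theta> ^ q ^ j \<noteq> \<theta>"
    proof
      assume "\<theta> ^ q ^ j = \<theta>"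
      then have "\<beta> ^ q ^ j = \<beta>"
        using frob_diff_power_commute[of \<theta> j] \<theta> by (simp add: \<beta>_def)
      with \<beta> j show False
        by (simp add: B_member_iff alg_degree_eq_s_iff)
    qed
  qed
  with \<beta> \<theta> show ?thesis
    using non_fixed_iff_alg_degree[OF assms(1,2) root] c_wieferich_iff[OF assms(1,2) root]
      artin_schreier_poly_dvd_Fseq_iff[of \<theta> \<beta>]
    by (simp add: B_member_iff \<beta>_def)
qed

end

theorem theorem3p4:
  fixes \<phi> :: "'k::{finite,field} \<Rightarrow> 'L::{finite,field}" and s :: nat
  assumes "CARD('k) \<ge> 3"
    and "s \<ge> 1"
    and "CARD('L) = CARD('k) ^ s"
    and "is_field_hom \<phi>"
  shows "{P :: 'k poly. c_wieferich P \<and> non_fixed P \<and> degree P = s} =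
         {P :: 'k poly. lead_coeff P = 1 \<and> irreducible P \<and>
            (\<exists>C \<in> B_set \<phi> s. \<exists>\<alpha> \<in> C. \<exists>R :: 'k poly.
               map_poly \<phi> R = R_poly CARD('k) s \<alpha> \<and> P dvd R)}"
proof -
  interpret field_extension \<phi> "CARD('k)" s
    using assms(3,4) by unfold_locales (simp_all add: field_hom_def)
  show ?thesis
    using B_member_of_wieferich wieferich_of_B_member
    by (auto simp: bex_B_set_iff c_wieferich_def)
qed

end
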